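(* Assume $r$ is a prime number distinct from the characteristic of $k$. For $\gamma\in D_\infty^*\cong GL_r(k_\infty)$ put $\mathbb H_\gamma=\{(z,\gamma z):z\in\Omega_r\}\subset\Omega_r\times\Omega_r$. Let $\gamma\in D^*$ with $\mathbb H_\gamma\ne\mathbb H_1$, and suppose $\alpha\in\mathbb H_\gamma\cap\mathbb H_1$. Let $T_\alpha\Omega_r^2\cong\mathbb C_\infty^{r-1}\times\mathbb C_\infty^{r-1}$ be the tangent space of $\Omega_r\times\Omega_r$ at $\alpha$, and $T_\alpha\mathbb H_\gamma$, $T_\alpha\mathbb H_1$ the tangent spaces of $\mathbb H_\gamma$, $\mathbb H_1$ at $\alpha$ viewed as subspaces of it. Then $T_\alpha\mathbb H_\gamma\cap T_\alpha\mathbb H_1=\{0\}$.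
   Context: $k$ is a global function field, $\infty$ a fixed place, $k_\infty$ the completion, $\mathbb C_\infty$ the completion of an algebraic closure of $k_\infty$. $D$ is a central division algebra over $k$ of dimension $r^2$ with $D\otimes_kk_\infty\cong M_r(k_\infty)$, so $D^*\subset GL_r(k_\infty)$. $\Omega_r=\mathbb P^{r-1}(\mathbb C_\infty)\setminus\bigcup(k_\infty\text{-rational hyperplanes})$, viewed as a rigid analytic space (in affine coordinates, the set of $(z_1,\dots,z_{r-1})\in\mathbb C_\infty^{r-1}$ with $c_1z_1+\cdots+c_{r-1}z_{r-1}+c_r\ne0$ for all nonzero $(c_1,\dots,c_r)\in k_\infty^r$), with $GL_r(k_\infty)$ acting by fractional linear transformations. *)

theory Defs
  imports "HOL-Computational_Algebra.Polynomial"
begin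

section \<open>Fields inside an ambient field 'c (playing the role of C_infinity)\<close>

definition is_subfield :: "'c::field set \<Rightarrow> bool" where
  "is_subfield S \<longleftrightarrow> 0 \<in> S \<and> 1 \<in> S \<and>
     (\<forall>x\<in>S. \<forall>y\<in>S. x + y \<in> S \<and> x - y \<in> S \<and> x * y \<in> S) \<and>
     (\<forall>x\<in>S. x \<noteq> 0 \<longrightarrow> inverse x \<in> S)"

definition poly_over :: "'c::field set \<Rightarrow> 'c poly \<Rightarrow> bool" where
  "poly_over S p \<longleftrightarrow> set (coeffs p) \<subseteq> S"

definition transcendental_over :: "'c::field set \<Rightarrow> 'c \<Rightarrow> bool" where
  "transcendental_over F t \<longleftrightarrow> (\<forall>p. poly_over F p \<and> poly p t = 0 \<longrightarrow> p = 0)"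

definition algebraic_over :: "'c::field set \<Rightarrow> 'c \<Rightarrow> bool" where
  "algebraic_over F x \<longleftrightarrow> (\<exists>p. p \<noteq> 0 \<and> poly_over F p \<and> poly p x = 0)"

definition rat_fun_field :: "'c::field set \<Rightarrow> 'c \<Rightarrow> 'c set" where
  "rat_fun_field F t = {poly p t / poly q t | p q. poly_over F p \<and> poly_over F q \<and> poly q t \<noteq> 0}"

definition global_function_field :: "'c::field set \<Rightarrow> bool" where
  "global_function_field k \<longleftrightarrow> is_subfield k \<and>
     (\<exists>F t B. is_subfield F \<and> finite F \<and> F \<subseteq> k \<and> t \<in> k \<and> transcendental_over F t \<and>
        finite B \<and> B \<subseteq> k \<and>
        k = {\<Sum>b\<in>B. c b * b | c. \<forall>b\<in>B. c b \<in> rat_fun_field F t})"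

definition nonarch_abs :: "('c::field \<Rightarrow> real) \<Rightarrow> bool" where
  "nonarch_abs av \<longleftrightarrow> (\<forall>x. av x \<ge> 0) \<and> (\<forall>x. av x = 0 \<longleftrightarrow> x = 0) \<and>
     (\<forall>x y. av (x * y) = av x * av y) \<and> (\<forall>x y. av (x + y) \<le> max (av x) (av y))"

definition av_cauchy :: "('c::field \<Rightarrow> real) \<Rightarrow> (nat \<Rightarrow> 'c) \<Rightarrow> bool" where
  "av_cauchy av X \<longleftrightarrow> (\<forall>e>0. \<exists>N. \<forall>m\<ge>N. \<forall>n\<ge>N. av (X m - X n) < e)"

definition av_converges_to :: "('c::field \<Rightarrow> real) \<Rightarrow> (nat \<Rightarrow> 'c) \<Rightarrow> 'c \<Rightarrow> bool" where
  "av_converges_to av X l \<longleftrightarrow> (\<forall>e>0. \<exists>N. \<forall>n\<ge>N. av (X n - l) < e)"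

definition av_dense_in :: "('c::field \<Rightarrow> real) \<Rightarrow> 'c set \<Rightarrow> 'c set \<Rightarrow> bool" where
  "av_dense_in av A S \<longleftrightarrow> (\<forall>x\<in>S. \<forall>e>0. \<exists>y\<in>A. av (x - y) < e)"

text \<open>
  The standing setting: 'c is C_infinity with absolute value av; it is complete and
  algebraically closed, and the algebraic closure of K_inf is dense in it; K_inf (= k_infinity)
  is a closed (hence complete) subfield in which the global function field k is dense, and
  av is non-trivial on k (so it comes from the place infinity of k).
\<close>
definition function_field_setting :: "('c::field \<Rightarrow> real) \<Rightarrow> 'c set \<Rightarrow> 'c set \<Rightarrow> bool" where
  "function_field_setting av k Kinf \<longleftrightarrow>
     nonarch_abs av \<and>
     (\<forall>X. av_cauchy av X \<longrightarrow> (\<exists>l. av_converges_to av X l)) \<and>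
     (\<forall>p::'c poly. degree p > 0 \<longrightarrow> (\<exists>x. poly p x = 0)) \<and>
     global_function_field k \<and> is_subfield Kinf \<and> k \<subseteq> Kinf \<and>
     (\<exists>x\<in>k. av x \<noteq> 0 \<and> av x \<noteq> 1) \<and>
     (\<forall>X l. (\<forall>n. X n \<in> Kinf) \<and> av_converges_to av X l \<longrightarrow> l \<in> Kinf) \<and>
     av_dense_in av k Kinf \<and>
     av_dense_in av {x. algebraic_over Kinf x} UNIV"

type_synonym 'c mat = "nat \<Rightarrow> nat \<Rightarrow> 'c"
type_synonym 'c vec = "nat \<Rightarrow> 'c"

definition is_mat :: "nat \<Rightarrow> 'c::field mat \<Rightarrow> bool" where
  "is_mat r A \<longleftrightarrow> (\<forall>i j. (i \<ge> r \<or> j \<ge> r) \<longrightarrow> A i j = 0)"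

definition is_vec :: "nat \<Rightarrow> 'c::field vec \<Rightarrow> bool" where
  "is_vec m v \<longleftrightarrow> (\<forall>i\<ge>m. v i = 0)"

definition mat_zero :: "'c::field mat" where "mat_zero = (\<lambda>i j. 0)"

definition mat_one :: "nat \<Rightarrow> 'c::field mat" where
  "mat_one r = (\<lambda>i j. if i = j \<and> i < r then 1 else 0)"

definition mat_add :: "'c::field mat \<Rightarrow> 'c mat \<Rightarrow> 'c mat" where
  "mat_add A B = (\<lambda>i j. A i j + B i j)"

definition mat_scale :: "'c::field \<Rightarrow> 'c mat \<Rightarrow> 'c mat" where
  "mat_scale c A = (\<lambda>i j. c * A i j)"

definition mat_mult :: "nat \<Rightarrow> 'c::field mat \<Rightarrow> 'c mat \<Rightarrow> 'c mat" where
  "mat_mult r A B = (\<lambda>i j. \<Sum>l<r. A i l * B l j)"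

definition mat_vec :: "nat \<Rightarrow> 'c::field mat \<Rightarrow> 'c vec \<Rightarrow> 'c vec" where
  "mat_vec r A v = (\<lambda>i. \<Sum>l<r. A i l * v l)"

text \<open>
  D is given as its image in D \<otimes>_k k_inf = M_r(k_inf): a set of r x r matrices with entries
  in K_inf that is a k-algebra containing k (as scalars), a division ring with centre k,
  and has a k-basis of r^2 elements which is K_inf-linearly independent (so that
  D \<otimes>_k k_inf \<rightarrow> M_r(k_inf) is an isomorphism).
\<close>
definition central_division_algebra_split ::
  "'c::field set \<Rightarrow> 'c set \<Rightarrow> nat \<Rightarrow> 'c mat set \<Rightarrow> bool" where
  "central_division_algebra_split k Kinf r D \<longleftrightarrow>
     (\<forall>A\<in>D. is_mat r A \<and> (\<forall>i j. A i j \<in> Kinf)) \<and>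
     (\<forall>A\<in>D. \<forall>B\<in>D. mat_add A B \<in> D \<and> mat_mult r A B \<in> D) \<and>
     (\<forall>c\<in>k. \<forall>A\<in>D. mat_scale c A \<in> D) \<and>
     mat_one r \<in> D \<and>
     (\<forall>A\<in>D. A \<noteq> mat_zero \<longrightarrow> (\<exists>B\<in>D. mat_mult r A B = mat_one r \<and> mat_mult r B A = mat_one r)) \<and>
     {A\<in>D. \<forall>B\<in>D. mat_mult r A B = mat_mult r B A} = {mat_scale c (mat_one r) | c. c \<in> k} \<and>
     (\<exists>Bs. finite Bs \<and> card Bs = r ^ 2 \<and> Bs \<subseteq> D \<and>
        D = {(\<lambda>i j. \<Sum>B\<in>Bs. c B * B i j) | c. \<forall>B\<in>Bs. c B \<in> k} \<and>
        (\<forall>c. (\<forall>B\<in>Bs. c B \<in> Kinf) \<and> (\<lambda>i j. \<Sum>B\<in>Bs. c B * B i j) = mat_zero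
              \<longrightarrow> (\<forall>B\<in>Bs. c B = 0)))"

text \<open>Affine point z \<in> C^{r-1} (coordinates 0..r-2) to homogeneous vector (z_0,...,z_{r-2},1).\<close>
definition homog :: "nat \<Rightarrow> 'c::field vec \<Rightarrow> 'c vec" where
  "homog r z = (\<lambda>i. if i < r - 1 then z i else if i = r - 1 then 1 else 0)"

definition Omega :: "'c::field set \<Rightarrow> nat \<Rightarrow> 'c vec set" where
  "Omega Kinf r = {z. is_vec (r - 1) z \<and>
     (\<forall>c. (\<forall>i<r. c i \<in> Kinf) \<and> (\<exists>i<r. c i \<noteq> 0) \<longrightarrow>
          (\<Sum>i<r - 1. c i * z i) + c (r - 1) \<noteq> 0)}"

text \<open>Fractional linear transformation: gamma z = affine coordinates of gamma (z,1)^T.\<close>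
definition act :: "nat \<Rightarrow> 'c::field mat \<Rightarrow> 'c vec \<Rightarrow> 'c vec" where
  "act r g z = (let w = mat_vec r g (homog r z) in
                 (\<lambda>i. if i < r - 1 then w i / w (r - 1) else 0))"

definition Hgraph :: "'c::field set \<Rightarrow> nat \<Rightarrow> 'c mat \<Rightarrow> ('c vec \<times> 'c vec) set" where
  "Hgraph Kinf r g = {(z, act r g z) | z. z \<in> Omega Kinf r}"

definition vnorm :: "('c::field \<Rightarrow> real) \<Rightarrow> nat \<Rightarrow> 'c vec \<Rightarrow> real" where
  "vnorm av m v = Max ((\<lambda>i. av (v i)) ` {..<m})"

definition has_deriv_at ::
  "('c::field \<Rightarrow> real) \<Rightarrow> nat \<Rightarrow> ('c vec \<Rightarrow> 'c vec) \<Rightarrow> ('c vec \<Rightarrow> 'c vec) \<Rightarrow> 'c vec \<Rightarrow> bool" where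
  "has_deriv_at av m f L z \<longleftrightarrow>
     (\<forall>v. is_vec m v \<longrightarrow> is_vec m (L v)) \<and>
     (\<forall>v w. is_vec m v \<longrightarrow> is_vec m w \<longrightarrow> L (\<lambda>i. v i + w i) = (\<lambda>i. L v i + L w i)) \<and>
     (\<forall>c v. is_vec m v \<longrightarrow> L (\<lambda>i. c * v i) = (\<lambda>i. c * L v i)) \<and>
     (\<forall>e>0. \<exists>d>0. \<forall>h. is_vec m h \<and> vnorm av m h < d \<longrightarrow>
        vnorm av m (\<lambda>i. f (\<lambda>j. z j + h j) i - f z i - L h i) \<le> e * vnorm av m h)"

text \<open>
  Tangent space at alpha = (z, gamma z) of the graph H_gamma of z \<mapsto> gamma z, as a subspace
  of T_alpha(Omega_r \<times> Omega_r) = C^{r-1} \<times> C^{r-1}: the graph of the derivative.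
\<close>
definition tangent_H :: "('c::field \<Rightarrow> real) \<Rightarrow> nat \<Rightarrow> 'c mat \<Rightarrow> ('c vec \<times> 'c vec) \<Rightarrow> ('c vec \<times> 'c vec) set" where
  "tangent_H av r g \<alpha> = {(v, w). is_vec (r - 1) v \<and>
      (\<exists>L. has_deriv_at av (r - 1) (act r g) L (fst \<alpha>) \<and> w = L v)}"

end

theory Submission
  imports Defs "Jordan_Normal_Form.Char_Poly"
begin

text \<open>
  Write \<open>\<alpha> = (z, z)\<close> with \<open>\<gamma> z = z\<close>, so \<open>V = (z, 1)\<close> is an eigenvector of \<open>\<gamma>\<close> for some
  eigenvalue \<open>\<lambda>\<close>. A common nonzero tangent vector \<open>u\<close> is fixed by the derivative of \<open>\<gamma>\<close> at \<open>z\<close>,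
  which means \<open>\<gamma> (u, 0) = \<lambda> (u, 0) + b V\<close>; hence \<open>\<lambda>\<close> is at least a double root of the
  characteristic polynomial \<open>\<chi>\<close> of \<open>\<gamma>\<close>. Let \<open>q\<close> be the minimal polynomial of \<open>\<lambda>\<close> over \<open>k\<^sub>\<infinity>\<close>.
  The rows of \<open>q(\<gamma>)\<close> are \<open>k\<^sub>\<infinity>\<close>-linear relations between the coordinates of \<open>V\<close>, which vanish
  because \<open>z \<in> \<Omega>\<^sub>r\<close>; so \<open>q(\<gamma>) = 0\<close>, every eigenvalue of \<open>\<gamma>\<close> is a root of \<open>q\<close>, and \<open>\<chi> = q\<^sup>e\<close>.
  As \<open>r\<close> is prime, either \<open>q\<close> is linear, so that \<open>\<gamma>\<close> is scalar and \<open>\<bbbH>\<^sub>\<gamma> = \<bbbH>\<^sub>1\<close>, or \<open>\<chi> = q\<close>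
  has degree \<open>r\<close>; then \<open>r \<noteq> char k\<close> makes \<open>q\<close> separable, contradicting the double root.
  Of \<open>\<gamma> \<in> D\<close> only the fact that its entries lie in \<open>k\<^sub>\<infinity>\<close> is used.
\<close>

text \<open>Importing the AFP matrix library shadows the type synonyms \<open>mat\<close> and \<open>vec\<close> of \<open>Defs\<close>;
  they are restored here, and the library's types are written \<open>Matrix.mat\<close> and \<open>Matrix.vec\<close>.\<close>
type_synonym 'c mat = "nat \<Rightarrow> nat \<Rightarrow> 'c"
type_synonym 'c vec = "nat \<Rightarrow> 'c"

context
  fixes S :: "'c::field set"
  assumes S: "is_subfield S"
begin

lemma subfield_zero: "0 \<in> S"
  using S unfolding is_subfield_def by blast

lemma subfield_one: "1 \<in> S"
  using S unfolding is_subfield_def by blast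

lemma subfield_add: "x \<in> S \<Longrightarrow> y \<in> S \<Longrightarrow> x + y \<in> S"
  using S unfolding is_subfield_def by blast

lemma subfield_diff: "x \<in> S \<Longrightarrow> y \<in> S \<Longrightarrow> x - y \<in> S"
  using S unfolding is_subfield_def by blast

lemma subfield_mult: "x \<in> S \<Longrightarrow> y \<in> S \<Longrightarrow> x * y \<in> S"
  using S unfolding is_subfield_def by blast

lemma subfield_inverse: "x \<in> S \<Longrightarrow> inverse x \<in> S"
  using S unfolding is_subfield_def by (metis inverse_zero)

lemma subfield_uminus: "x \<in> S \<Longrightarrow> - x \<in> S"
  using subfield_diff[of 0 x] subfield_zero by simp

lemma subfield_divide: "x \<in> S \<Longrightarrow> y \<in> S \<Longrightarrow> x / y \<in> S"
  by (simp add: divide_inverse subfield_mult subfield_inverse)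

lemma subfield_of_nat: "of_nat n \<in> S"
  by (induction n) (auto simp: subfield_zero subfield_one subfield_add)

lemma subfield_sum: "(\<And>i. i \<in> A \<Longrightarrow> f i \<in> S) \<Longrightarrow> sum f A \<in> S"
  by (induction A rule: infinite_finite_induct) (auto simp: subfield_zero subfield_add)

end

context
  fixes S :: "'c::field set"
  assumes S: "is_subfield S"
begin

lemma poly_over_iff_coeff: "poly_over S p \<longleftrightarrow> (\<forall>n. coeff p n \<in> S)"
proof
  assume "poly_over S p"
  then show "\<forall>n. coeff p n \<in> S"
    unfolding poly_over_def
    by (metis coeff_0 coeff_in_coeffs le_degree subfield_zero[OF S] subset_iff)
qed (auto simp: poly_over_def coeffs_def)

lemma poly_overI: "(\<And>n. coeff p n \<in> S) \<Longrightarrow> poly_over S p"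
  by (simp add: poly_over_iff_coeff)

lemma poly_over_coeff: "poly_over S p \<Longrightarrow> coeff p n \<in> S"
  by (simp add: poly_over_iff_coeff)

lemma poly_over_zero: "poly_over S 0"
  by (rule poly_overI) (simp add: subfield_zero[OF S])

lemma poly_over_pCons: "c \<in> S \<Longrightarrow> poly_over S p \<Longrightarrow> poly_over S (pCons c p)"
  by (rule poly_overI) (auto simp: coeff_pCons poly_over_coeff split: nat.splits)

lemma poly_over_one: "poly_over S 1"
  by (simp add: one_pCons poly_over_pCons poly_over_zero subfield_one[OF S])

lemma poly_over_add: "poly_over S p \<Longrightarrow> poly_over S q \<Longrightarrow> poly_over S (p + q)"
  by (rule poly_overI) (auto intro!: subfield_add[OF S] poly_over_coeff)

lemma poly_over_diff: "poly_over S p \<Longrightarrow> poly_over S q \<Longrightarrow> poly_over S (p - q)"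
  by (rule poly_overI) (auto intro!: subfield_diff[OF S] poly_over_coeff)

lemma poly_over_uminus: "poly_over S p \<Longrightarrow> poly_over S (- p)"
  by (rule poly_overI) (auto intro!: subfield_uminus[OF S] poly_over_coeff)

lemma poly_over_monom: "c \<in> S \<Longrightarrow> poly_over S (monom c n)"
  by (rule poly_overI) (simp add: coeff_monom subfield_zero[OF S])

lemma poly_over_smult: "c \<in> S \<Longrightarrow> poly_over S p \<Longrightarrow> poly_over S (Polynomial.smult c p)"
  by (rule poly_overI) (auto intro!: subfield_mult[OF S] poly_over_coeff)

lemma poly_over_mult: "poly_over S p \<Longrightarrow> poly_over S q \<Longrightarrow> poly_over S (p * q)"
  by (rule poly_overI) (auto simp: coeff_mult intro!: subfield_sum[OF S] subfield_mult[OF S] poly_over_coeff)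

lemma poly_over_pderiv: "poly_over S p \<Longrightarrow> poly_over S (pderiv p)"
  by (rule poly_overI)
    (metis coeff_pderiv of_nat_Suc subfield_mult[OF S] subfield_of_nat[OF S] poly_over_coeff)

lemma poly_over_sum: "(\<And>i. i \<in> A \<Longrightarrow> poly_over S (f i)) \<Longrightarrow> poly_over S (sum f A)"
  by (induction A rule: infinite_finite_induct) (auto intro: poly_over_add poly_over_zero)

lemma poly_over_prod: "(\<And>i. i \<in> A \<Longrightarrow> poly_over S (f i)) \<Longrightarrow> poly_over S (prod f A)"
  by (induction A rule: infinite_finite_induct) (auto intro: poly_over_mult poly_over_one)

lemma poly_over_div_mod:
  assumes g: "poly_over S g" "g \<noteq> 0"
  shows "poly_over S h \<Longrightarrow>
    \<exists>q \<rho>. poly_over S q \<and> poly_over S \<rho> \<and> h = q * g + \<rho> \<and> (\<rho> = 0 \<or> degree \<rho> < degree g)"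
proof (induction "degree h" arbitrary: h rule: less_induct)
  case less
  show ?case
  proof (cases "h = 0 \<or> degree h < degree g")
    case True
    then show ?thesis using less.prems by (intro exI[of _ 0] exI[of _ h]) (auto simp: poly_over_zero)
  next
    case False
    then have h0: "h \<noteq> 0" and dg: "degree g \<le> degree h" by auto
    define c where "c = lead_coeff h / lead_coeff g"
    define m where "m = monom c (degree h - degree g) * g"
    have cS: "c \<in> S"
      unfolding c_def using less.prems g by (intro subfield_divide[OF S] poly_over_coeff)
    have dm: "degree m = degree h" and lm: "coeff m (degree h) = lead_coeff h"
      using h0 g dg by (simp_all add: m_def c_def degree_mult_eq degree_monom_eq coeff_monom_mult)
    have h'S: "poly_over S (h - m)"
      unfolding m_def by (intro poly_over_diff poly_over_mult poly_over_monom less.prems cS g)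
    have "h - m = 0 \<or> degree (h - m) < degree h"
    proof (rule ccontr)
      assume "\<not> ?thesis"
      moreover have "degree (h - m) \<le> degree h"
        using degree_diff_le[of h "degree h" m] dm by simp
      ultimately have "degree (h - m) = degree h" "h - m \<noteq> 0" by auto
      then show False using lm by (metis coeff_diff diff_self leading_coeff_0_iff)
    qed
    then show ?thesis
    proof
      assume "h - m = 0"
      then show ?thesis using poly_over_monom[OF cS]
        by (intro exI[of _ "monom c (degree h - degree g)"] exI[of _ 0])
          (auto simp: m_def poly_over_zero)
    next
      assume "degree (h - m) < degree h"
      from less.hyps[OF this h'S] obtain q \<rho> where q: "poly_over S q" "poly_over S \<rho>"
        "h - m = q * g + \<rho>" "\<rho> = 0 \<or> degree \<rho> < degree g" by blast
      have "h = (q + monom c (degree h - degree g)) * g + \<rho>"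
        using q(3) unfolding m_def by (simp add: algebra_simps)
      moreover have "poly_over S (q + monom c (degree h - degree g))"
        using q(1) cS by (intro poly_over_add poly_over_monom)
      ultimately show ?thesis using q(2,4) by blast
    qed
  qed
qed

end

section \<open>Minimal polynomials over a subfield\<close>

definition is_min_poly :: "'c::field set \<Rightarrow> 'c \<Rightarrow> 'c poly \<Rightarrow> bool" where
  "is_min_poly S x g \<longleftrightarrow> poly_over S g \<and> lead_coeff g = 1 \<and> poly g x = 0 \<and>
     (\<forall>p. p \<noteq> 0 \<and> poly_over S p \<and> poly p x = 0 \<longrightarrow> degree g \<le> degree p)"

lemma is_min_poly_nonzero: "is_min_poly S x g \<Longrightarrow> g \<noteq> 0"
  unfolding is_min_poly_def by auto

lemma is_min_poly_degree_pos: "is_min_poly S x g \<Longrightarrow> 0 < degree g"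
  unfolding is_min_poly_def by (metis degree_0_id one_neq_zero poly_const_conv neq0_conv)

context
  fixes S :: "'c::field set"
  assumes S: "is_subfield S"
begin

lemma is_min_poly_exists:
  assumes "p \<noteq> 0" "poly_over S p" "poly p x = 0"
  shows "\<exists>g. is_min_poly S x g"
proof -
  obtain q where q: "q \<noteq> 0" "poly_over S q" "poly q x = 0"
    and qmin: "\<And>p. p \<noteq> 0 \<and> poly_over S p \<and> poly p x = 0 \<Longrightarrow> degree q \<le> degree p"
    using ex_has_least_nat[of "\<lambda>q. q \<noteq> 0 \<and> poly_over S q \<and> poly q x = 0" p degree] assms
    by blast
  define g where "g = Polynomial.smult (inverse (lead_coeff q)) q"
  have "poly_over S g"
    unfolding g_def using q by (intro poly_over_smult[OF S] subfield_inverse[OF S] poly_over_coeff[OF S])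
  with q qmin show ?thesis
    unfolding is_min_poly_def by (intro exI[of _ g]) (simp add: g_def)
qed

lemma is_min_poly_dvd:
  assumes g: "is_min_poly S x g" and h: "poly_over S h" "poly h x = 0"
  shows "\<exists>q. poly_over S q \<and> h = q * g"
proof -
  obtain q \<rho> where q: "poly_over S q" "poly_over S \<rho>" "h = q * g + \<rho>"
    "\<rho> = 0 \<or> degree \<rho> < degree g"
    using poly_over_div_mod[OF S _ is_min_poly_nonzero[OF g] h(1)] g by (auto simp: is_min_poly_def)
  have "poly \<rho> x = 0"
    using q(3) h(2) g by (simp add: is_min_poly_def)
  then have "\<rho> = 0"
    using g q(2,4) unfolding is_min_poly_def by (meson not_le)
  with q show ?thesis by auto
qed

lemma is_min_poly_root:
  assumes g: "is_min_poly S x g" and y: "poly g y = 0"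
  shows "is_min_poly S y g"
proof -
  have gS: "poly_over S g" using g by (simp add: is_min_poly_def)
  obtain m where m: "is_min_poly S y m"
    using is_min_poly_exists[OF is_min_poly_nonzero[OF g] gS y] by blast
  obtain q where q: "poly_over S q" "g = q * m"
    using is_min_poly_dvd[OF m gS y] by blast
  have q0: "q \<noteq> 0" using q(2) is_min_poly_nonzero[OF g] by auto
  have "degree g \<le> degree m"
  proof (cases "poly m x = 0")
    case True
    then show ?thesis using g m is_min_poly_nonzero[OF m] by (auto simp: is_min_poly_def)
  next
    case False
    then have "poly q x = 0" using g q(2) by (simp add: is_min_poly_def)
    then have "degree g \<le> degree q" using g q0 q(1) by (simp add: is_min_poly_def)
    then show ?thesis
      using q(2) q0 is_min_poly_nonzero[OF m] is_min_poly_degree_pos[OF m]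
      by (simp add: degree_mult_eq)
  qed
  with g y m show ?thesis unfolding is_min_poly_def by fastforce
qed

lemma is_min_poly_power:
  assumes ac: "\<forall>p::'c poly. degree p > 0 \<longrightarrow> (\<exists>x. poly p x = 0)"
    and g: "is_min_poly S x g"
  shows "poly_over S h \<Longrightarrow> lead_coeff h = 1 \<Longrightarrow> (\<forall>y. poly h y = 0 \<longrightarrow> poly g y = 0) \<Longrightarrow>
    \<exists>e. h = g ^ e"
proof (induction "degree h" arbitrary: h rule: less_induct)
  case less
  show ?case
  proof (cases "degree h = 0")
    case True
    then show ?thesis using less.prems by (intro exI[of _ 0]) (auto elim: degree_eq_zeroE)
  next
    case False
    then obtain y where y: "poly h y = 0" using ac by blast
    then have "is_min_poly S y g" using is_min_poly_root[OF g] less.prems(3) by blast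
    then obtain q where q: "poly_over S q" "h = q * g"
      using is_min_poly_dvd less.prems(1) y by blast
    have lq: "lead_coeff q = 1"
      using less.prems(2) q(2) g by (simp add: lead_coeff_mult is_min_poly_def)
    then have "q \<noteq> 0" by auto
    then have "degree q < degree h"
      using q(2) is_min_poly_nonzero[OF g] is_min_poly_degree_pos[OF g] by (simp add: degree_mult_eq)
    moreover have "\<forall>y. poly q y = 0 \<longrightarrow> poly g y = 0" using less.prems(3) q(2) by auto
    ultimately obtain e where "q = g ^ e" using less.hyps q(1) lq by blast
    then show ?thesis using q(2) by (intro exI[of _ "Suc e"]) (simp add: mult.commute)
  qed
qed

text \<open>The derivative of \<open>g\<close> is a nonzero polynomial over \<open>S\<close> of smaller degree, so it does not
  vanish at \<open>x\<close>.\<close>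
lemma order_is_min_poly:
  assumes g: "is_min_poly S x g" and d: "(of_nat (degree g) :: 'c) \<noteq> 0"
  shows "order x g = 1"
proof -
  have gS: "poly_over S g" and g1: "lead_coeff g = 1" and gx: "poly g x = 0"
    using g by (auto simp: is_min_poly_def)
  have dg: "degree g \<ge> 1" using is_min_poly_degree_pos[OF g] by simp
  have "coeff (pderiv g) (degree g - 1) = of_nat (degree g)"
    using dg g1 by (simp add: coeff_pderiv)
  then have "pderiv g \<noteq> 0" using d by auto
  moreover have "degree (pderiv g) < degree g"
    using dg by (intro le_less_trans[OF degree_le[of "degree g - 1"]]) (auto simp: coeff_pderiv coeff_eq_0)
  ultimately have "poly (pderiv g) x \<noteq> 0"
    using g poly_over_pderiv[OF S gS] unfolding is_min_poly_def by force
  moreover have "poly (pderiv g) x = 0" if "2 \<le> order x g"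
  proof -
    from that obtain s where "g = [:-x, 1:]^2 * s"
      using order_divides by (metis dvdE)
    then show ?thesis by (simp only: numeral_2_eq_2 lemma_order_pderiv1) simp
  qed
  moreover have "order x g \<noteq> 0" using gx is_min_poly_nonzero[OF g] order_root by blast
  ultimately show ?thesis by linarith
qed

end

section \<open>The fractional linear action and its derivative\<close>

lemma homog_add: "is_vec (r - 1) h \<Longrightarrow> homog r (\<lambda>j. z j + h j) = (\<lambda>i. homog r z i + h i)"
  unfolding homog_def is_vec_def by (auto simp: fun_eq_iff)

lemma mat_vec_add: "mat_vec r g (\<lambda>i. x i + y i) = (\<lambda>i. mat_vec r g x i + mat_vec r g y i)"
  unfolding mat_vec_def by (auto simp: fun_eq_iff algebra_simps sum.distrib)

lemma mat_vec_scale: "mat_vec r g (\<lambda>i. c * x i) = (\<lambda>i. c * mat_vec r g x i)"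
  unfolding mat_vec_def by (auto simp: fun_eq_iff algebra_simps sum_distrib_left)

lemma mat_vec_mat_one: "i < r \<Longrightarrow> mat_vec r (mat_one r) x i = x i"
  unfolding mat_vec_def mat_one_def by (simp add: if_distrib[of "\<lambda>a. a * _"] cong: if_cong)

lemma act_mat_one: "is_vec (r - 1) z \<Longrightarrow> act r (mat_one r) z = z"
  unfolding act_def Let_def is_vec_def by (auto simp: fun_eq_iff mat_vec_mat_one homog_def)

text \<open>The derivative of \<open>z \<mapsto> \<gamma> z\<close>, written with the value \<open>\<gamma> z\<close> itself:
  \<open>h \<mapsto> (a - (\<gamma> z) b) / \<lambda>\<close>, where \<open>(a, b) = \<gamma> (h, 0)\<close> and \<open>\<lambda>\<close> is the last entry of \<open>\<gamma> (z, 1)\<close>.\<close>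
definition act_deriv :: "nat \<Rightarrow> 'c::field mat \<Rightarrow> 'c vec \<Rightarrow> 'c vec \<Rightarrow> 'c vec" where
  "act_deriv r g z h = (\<lambda>i. if i < r - 1
     then (mat_vec r g h i - act r g z i * mat_vec r g h (r - 1)) / mat_vec r g (homog r z) (r - 1)
     else 0)"

lemma act_deriv_mat_one: "is_vec (r - 1) z \<Longrightarrow> is_vec (r - 1) v \<Longrightarrow> act_deriv r (mat_one r) z v = v"
  unfolding act_deriv_def act_mat_one is_vec_def
  by (auto simp: fun_eq_iff mat_vec_mat_one homog_def)

lemma act_add_remainder:
  fixes g :: "'c::field mat" and r :: nat and z h :: "'c vec"
  defines "lam \<equiv> mat_vec r g (homog r z) (r - 1)" and "a \<equiv> mat_vec r g h"
    and "b \<equiv> mat_vec r g h (r - 1)"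
  assumes h: "is_vec (r - 1) h" and i: "i < r - 1" and lam0: "lam \<noteq> 0" and lamb0: "lam + b \<noteq> 0"
  shows "act r g (\<lambda>j. z j + h j) i - act r g z i - act_deriv r g z h i
    = - ((a i - act r g z i * b) * b / (lam * (lam + b)))"
proof -
  define y where "y = act r g z"
  have "y i = mat_vec r g (homog r z) i / lam" using i by (simp add: y_def act_def Let_def lam_def)
  then have act_zh: "act r g (\<lambda>j. z j + h j) i = (lam * y i + a i) / (lam + b)"
    using i lam0 unfolding act_def Let_def homog_add[OF h] mat_vec_add lam_def a_def b_def
    by simp
  have deriv: "act_deriv r g z h i = (a i - y i * b) / lam"
    unfolding act_deriv_def a_def b_def lam_def y_def using i by simp
  show ?thesis
    unfolding act_zh deriv y_def[symmetric] using lamb0 lam0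
    by (simp add: divide_simps) (simp add: algebra_simps)
qed

context
  fixes av :: "'c::field \<Rightarrow> real"
  assumes N: "nonarch_abs av"
begin

lemma av_nonneg: "0 \<le> av x"
  using N unfolding nonarch_abs_def by blast

lemma av_eq_0_iff: "av x = 0 \<longleftrightarrow> x = 0"
  using N unfolding nonarch_abs_def by blast

lemma av_zero [simp]: "av 0 = 0"
  by (simp add: av_eq_0_iff)

lemma av_mult: "av (x * y) = av x * av y"
  using N unfolding nonarch_abs_def by blast

lemma av_add_le: "av (x + y) \<le> max (av x) (av y)"
  using N unfolding nonarch_abs_def by blast

lemma av_one: "av 1 = 1"
  using av_mult[of 1 1] av_eq_0_iff[of 1] by simp

lemma av_uminus: "av (- x) = av x"
proof -
  have "av (-1) * av (-1) = 1" using av_mult[of "-1" "-1"] av_one by simp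
  then have "(av (-1) - 1) * (av (-1) + 1) = 0" by (simp add: algebra_simps)
  then have "av (-1) = 1" using av_nonneg[of "-1"] by simp
  then show ?thesis using av_mult[of "-1" x] by simp
qed

lemma av_diff_le: "av (x - y) \<le> max (av x) (av y)"
  using av_add_le[of x "- y"] av_uminus[of y] by simp

lemma av_divide: "av (x / y) = av x / av y"
proof (cases "y = 0")
  case False
  then have "av x = av (x / y) * av y" using av_mult[of "x / y" y] by simp
  then show ?thesis using False av_eq_0_iff[of y] by (simp add: field_simps)
qed simp

lemma av_power: "av (x ^ n) = av x ^ n"
  by (induction n) (auto simp: av_one av_mult)

lemma av_sum_le: "(\<And>i. i \<in> A \<Longrightarrow> av (f i) \<le> c) \<Longrightarrow> 0 \<le> c \<Longrightarrow> av (sum f A) \<le> c"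
proof (induction A rule: infinite_finite_induct)
  case (insert x F)
  then have "av (f x) \<le> c" "av (sum f F) \<le> c" by auto
  then show ?case using av_add_le[of "f x" "sum f F"] insert(1,2) by simp
qed simp_all

lemma vnorm_ge: "i < m \<Longrightarrow> av (v i) \<le> vnorm av m v"
  unfolding vnorm_def by (rule Max_ge) auto

lemma vnorm_le: "0 < m \<Longrightarrow> (\<And>i. i < m \<Longrightarrow> av (v i) \<le> c) \<Longrightarrow> vnorm av m v \<le> c"
  unfolding vnorm_def by (subst Max_le_iff) auto

lemma vnorm_nonneg: "0 < m \<Longrightarrow> 0 \<le> vnorm av m v"
  using vnorm_ge[of 0 m v] av_nonneg[of "v 0"] by linarith

lemma nonarch_abs_small_element:
  assumes x: "av x \<noteq> 0" "av x \<noteq> 1"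
  obtains t where "0 < av t" "av t < 1"
proof (cases "av x < 1")
  case True
  then show ?thesis using that[of x] x(1) av_nonneg[of x] by linarith
next
  case False
  then have "1 < av x" using x(2) by simp
  moreover have "av (inverse x) * av x = 1"
    using x av_mult[of "inverse x" x] av_one by (simp add: av_eq_0_iff)
  ultimately have "av (inverse x) = 1 / av x" by (simp add: eq_divide_eq)
  with \<open>1 < av x\<close> have "0 < av (inverse x)" "av (inverse x) < 1" by simp_all
  then show ?thesis by (rule that)
qed

lemma has_deriv_at_diff_small:
  assumes L1: "has_deriv_at av m f L1 z" and L2: "has_deriv_at av m f L2 z" and e: "0 < e"
  obtains d where "0 < d"
    "\<And>h i. is_vec m h \<Longrightarrow> vnorm av m h < d \<Longrightarrow> i < m \<Longrightarrow> av (L1 h i - L2 h i) \<le> e * vnorm av m h"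
proof -
  obtain d1 where d1: "d1 > 0" "\<forall>h. is_vec m h \<and> vnorm av m h < d1 \<longrightarrow>
      vnorm av m (\<lambda>i. f (\<lambda>j. z j + h j) i - f z i - L1 h i) \<le> e * vnorm av m h"
    using L1 e unfolding has_deriv_at_def by blast
  obtain d2 where d2: "d2 > 0" "\<forall>h. is_vec m h \<and> vnorm av m h < d2 \<longrightarrow>
      vnorm av m (\<lambda>i. f (\<lambda>j. z j + h j) i - f z i - L2 h i) \<le> e * vnorm av m h"
    using L2 e unfolding has_deriv_at_def by blast
  have "av (L1 h i - L2 h i) \<le> e * vnorm av m h"
    if h: "is_vec m h" "vnorm av m h < min d1 d2" and i: "i < m" for h i
  proof -
    define E1 where "E1 = f (\<lambda>j. z j + h j) i - f z i - L1 h i"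
    define E2 where "E2 = f (\<lambda>j. z j + h j) i - f z i - L2 h i"
    have "av E1 \<le> e * vnorm av m h"
      using d1(2) h vnorm_ge[OF i, of "\<lambda>i. f (\<lambda>j. z j + h j) i - f z i - L1 h i"]
      unfolding E1_def by (meson min.strict_boundedE order_trans)
    moreover have "av E2 \<le> e * vnorm av m h"
      using d2(2) h vnorm_ge[OF i, of "\<lambda>i. f (\<lambda>j. z j + h j) i - f z i - L2 h i"]
      unfolding E2_def by (meson min.strict_boundedE order_trans)
    moreover have "L1 h i - L2 h i = E2 - E1" by (simp add: E1_def E2_def)
    ultimately show ?thesis using av_diff_le[of E2 E1] by simp
  qed
  then show ?thesis using that[of "min d1 d2"] d1(1) d2(1) by simp
qed

text \<open>Uniqueness needs scalars of arbitrarily small absolute value, which the powers of \<open>t\<close> provide.\<close>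
lemma has_deriv_at_unique:
  assumes t: "0 < av t" "av t < 1" and m: "0 < m"
    and L1: "has_deriv_at av m f L1 z" and L2: "has_deriv_at av m f L2 z" and v: "is_vec m v"
  shows "L1 v = L2 v"
proof
  fix i
  show "L1 v i = L2 v i"
  proof (cases "i < m")
    case False
    then show ?thesis using L1 L2 v unfolding has_deriv_at_def is_vec_def by auto
  next
    case i: True
    define n where "n = vnorm av m v"
    have n0: "0 \<le> n" unfolding n_def using vnorm_nonneg[OF m] .
    have "av (L1 v i - L2 v i) \<le> 0 + e" if e: "0 < e" for e
    proof -
      obtain d where d: "0 < d" "\<And>h i. is_vec m h \<Longrightarrow> vnorm av m h < d \<Longrightarrow> i < m \<Longrightarrow>
          av (L1 h i - L2 h i) \<le> e / (n + 1) * vnorm av m h"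
        using has_deriv_at_diff_small[OF L1 L2, of "e / (n + 1)"] e n0 by auto
      obtain k where k: "av t ^ k < d / (n + 1)"
        using real_arch_pow_inv[of "d / (n + 1)" "av t"] d(1) n0 t by auto
      define s where "s = t ^ k"
      have s0: "0 < av s" using t by (simp add: s_def av_power)
      have hv: "is_vec m (\<lambda>j. s * v j)" using v unfolding is_vec_def by auto
      have hn: "vnorm av m (\<lambda>j. s * v j) \<le> av s * n"
        by (rule vnorm_le[OF m]) (auto simp: av_mult n_def intro!: mult_left_mono vnorm_ge av_nonneg)
      also have "\<dots> \<le> av s * (n + 1)" using s0 by simp
      also have "\<dots> < d" using k n0 by (simp add: s_def av_power pos_less_divide_eq)
      finally have "vnorm av m (\<lambda>j. s * v j) < d" .
      then have "av (L1 (\<lambda>j. s * v j) i - L2 (\<lambda>j. s * v j) i) \<le> e / (n + 1) * vnorm av m (\<lambda>j. s * v j)"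
        using d(2)[OF hv _ i] by blast
      also have "\<dots> \<le> e / (n + 1) * (av s * n)"
        using hn e n0 by (intro mult_left_mono) auto
      also have "L1 (\<lambda>j. s * v j) i - L2 (\<lambda>j. s * v j) i = s * (L1 v i - L2 v i)"
        using L1 L2 v unfolding has_deriv_at_def by (simp add: algebra_simps)
      finally have "av s * av (L1 v i - L2 v i) \<le> av s * (e / (n + 1) * n)"
        by (simp add: av_mult mult_ac)
      then have "av (L1 v i - L2 v i) \<le> e / (n + 1) * n"
        using s0 mult_le_cancel_left_pos by blast
      also have "\<dots> \<le> e" using e n0 by (simp add: field_simps)
      finally show ?thesis by simp
    qed
    then have "av (L1 v i - L2 v i) \<le> 0" by (rule field_le_epsilon)
    then show ?thesis using av_nonneg av_eq_0_iff by (metis antisym eq_iff_diff_eq_0)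
  qed
qed

lemma av_mat_vec_le:
  assumes h: "\<And>l. av (h l) \<le> c" and c: "0 \<le> c" and i: "i < r"
  shows "av (mat_vec r g h i) \<le> (\<Sum>i<r. \<Sum>l<r. av (g i l)) * c"
proof -
  have "av (g i l) \<le> (\<Sum>i<r. \<Sum>l<r. av (g i l))" if "l < r" for l
  proof -
    have "av (g i l) \<le> (\<Sum>l<r. av (g i l))"
      using that by (intro member_le_sum) (auto simp: av_nonneg)
    also have "\<dots> \<le> (\<Sum>i<r. \<Sum>l<r. av (g i l))"
      using i by (intro member_le_sum[of i "{..<r}" "\<lambda>i. \<Sum>l<r. av (g i l)"])
        (auto intro!: sum_nonneg simp: av_nonneg)
    finally show ?thesis .
  qed
  moreover have "0 \<le> (\<Sum>i<r. \<Sum>l<r. av (g i l))" by (intro sum_nonneg) (simp add: av_nonneg)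
  ultimately show ?thesis
    unfolding mat_vec_def using h c
    by (intro av_sum_le) (auto simp: av_mult intro!: mult_mono av_nonneg)
qed

text \<open>By \<open>act_add_remainder\<close> the remainder is a product of two terms linear in \<open>h\<close> over a
  denominator that stays away from \<open>0\<close> while \<open>h\<close> is small.\<close>
lemma act_remainder_le:
  fixes g :: "'c mat" and r :: nat and z h :: "'c vec"
  defines "lam \<equiv> mat_vec r g (homog r z) (r - 1)" and "M \<equiv> (\<Sum>i<r. \<Sum>l<r. av (g i l))"
    and "Y \<equiv> 1 + (\<Sum>i<r - 1. av (act r g z i))" and "n \<equiv> vnorm av (r - 1) h"
  assumes r: "2 \<le> r" and lam0: "lam \<noteq> 0" and h: "is_vec (r - 1) h" and small: "M * n < av lam"
  shows "vnorm av (r - 1) (\<lambda>i. act r g (\<lambda>j. z j + h j) i - act r g z i - act_deriv r g z h i)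
    \<le> M * M * Y / (av lam * av lam) * n * n"
proof -
  define y where "y = act r g z"
  define a where "a = mat_vec r g h"
  define b where "b = a (r - 1)"
  have m: "0 < r - 1" using r by simp
  have alam: "0 < av lam" using lam0 av_eq_0_iff[of lam] av_nonneg[of lam] by simp
  have M0: "0 \<le> M" unfolding M_def by (intro sum_nonneg) (auto simp: av_nonneg)
  have Y1: "1 \<le> Y" unfolding Y_def by (auto intro!: sum_nonneg simp: av_nonneg)
  have yY: "av (y i) \<le> Y" if "i < r - 1" for i
    using member_le_sum[of i "{..<r - 1}" "\<lambda>i. av (y i)"] that by (simp add: Y_def y_def av_nonneg)
  have n0: "0 \<le> n" unfolding n_def by (rule vnorm_nonneg[OF m])
  have "av (h l) \<le> n" for l
    using h n0 vnorm_ge[of l "r - 1" h] unfolding n_def is_vec_def by (cases "l < r - 1") auto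
  then have aM: "av (a i) \<le> M * n" if "i < r" for i
    unfolding a_def M_def using av_mat_vec_le n0 that by blast
  have bM: "av b \<le> M * n" unfolding b_def using aM[of "r - 1"] r by simp
  then have lb: "av lam \<le> av (lam + b)" using av_diff_le[of "lam + b" b] small by simp
  then have lb0: "lam + b \<noteq> 0" using alam by (auto simp: av_eq_0_iff)
  show ?thesis
  proof (rule vnorm_le[OF m])
    fix i assume i: "i < r - 1"
    have "av (a i - y i * b) \<le> max (av (a i)) (av (y i) * av b)"
      using av_diff_le[of "a i" "y i * b"] by (simp add: av_mult)
    also have "\<dots> \<le> M * n * Y"
    proof -
      have "av (a i) \<le> M * n * 1" using aM[of i] i by simp
      also have "\<dots> \<le> M * n * Y" using Y1 M0 n0 by (intro mult_left_mono) auto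
      finally have "av (a i) \<le> M * n * Y" .
      moreover have "av (y i) * av b \<le> Y * (M * n)"
        using yY[OF i] bM Y1 by (intro mult_mono) (auto simp: av_nonneg)
      ultimately show ?thesis by (simp add: mult_ac)
    qed
    finally have num: "av (a i - y i * b) \<le> M * n * Y" .
    have "av (act r g (\<lambda>j. z j + h j) i - act r g z i - act_deriv r g z h i)
        = av (a i - y i * b) * av b / (av lam * av (lam + b))"
      using act_add_remainder[OF h i lam0[unfolded lam_def] lb0[unfolded b_def a_def lam_def]]
      by (simp add: a_def b_def lam_def y_def av_uminus av_divide av_mult)
    also have "\<dots> \<le> (M * n * Y) * (M * n) / (av lam * av lam)"
      using num bM alam lb Y1 M0 n0
      by (intro frac_le) (auto intro!: mult_mono mult_nonneg_nonneg simp: av_nonneg)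
    also have "\<dots> = M * M * Y / (av lam * av lam) * n * n" by (simp add: field_simps)
    finally show "av (act r g (\<lambda>j. z j + h j) i - act r g z i - act_deriv r g z h i)
      \<le> M * M * Y / (av lam * av lam) * n * n" .
  qed
qed

lemma act_remainder_quadratic:
  assumes r: "2 \<le> r" and lam0: "mat_vec r g (homog r z) (r - 1) \<noteq> 0"
  obtains C \<delta> where "0 \<le> C" "0 < \<delta>"
    "\<And>h. is_vec (r - 1) h \<Longrightarrow> vnorm av (r - 1) h < \<delta> \<Longrightarrow>
      vnorm av (r - 1) (\<lambda>i. act r g (\<lambda>j. z j + h j) i - act r g z i - act_deriv r g z h i)
        \<le> C * vnorm av (r - 1) h * vnorm av (r - 1) h"
proof -
  define lam where "lam = mat_vec r g (homog r z) (r - 1)"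
  define M where "M = (\<Sum>i<r. \<Sum>l<r. av (g i l))"
  define Y where "Y = 1 + (\<Sum>i<r - 1. av (act r g z i))"
  have alam: "0 < av lam" using lam0 av_eq_0_iff[of lam] av_nonneg[of lam] by (simp add: lam_def)
  have M0: "0 \<le> M" unfolding M_def by (intro sum_nonneg) (auto simp: av_nonneg)
  have Y1: "1 \<le> Y" unfolding Y_def by (auto intro!: sum_nonneg simp: av_nonneg)
  have "M * vnorm av (r - 1) h < av lam" if "vnorm av (r - 1) h < av lam / (M + 1)" for h
  proof -
    have "M * vnorm av (r - 1) h \<le> M * (av lam / (M + 1))"
      using that M0 vnorm_nonneg[of "r - 1" h] r by (intro mult_left_mono) auto
    also have "\<dots> < av lam" using alam M0 by (simp add: field_simps)
    finally show ?thesis .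
  qed
  then show ?thesis
    using that[of "M * M * Y / (av lam * av lam)" "av lam / (M + 1)"] alam M0 Y1
      act_remainder_le[OF r lam0] unfolding lam_def M_def Y_def by simp
qed

lemma has_deriv_at_act:
  assumes r: "2 \<le> r" and lam0: "mat_vec r g (homog r z) (r - 1) \<noteq> 0"
  shows "has_deriv_at av (r - 1) (act r g) (act_deriv r g z) z"
  unfolding has_deriv_at_def
proof (intro conjI allI impI)
  fix v :: "'c vec"
  show "is_vec (r - 1) (act_deriv r g z v)" unfolding is_vec_def act_deriv_def by simp
next
  fix v1 v2 :: "'c vec"
  show "act_deriv r g z (\<lambda>i. v1 i + v2 i) = (\<lambda>i. act_deriv r g z v1 i + act_deriv r g z v2 i)"
    unfolding act_deriv_def mat_vec_add by (auto simp: fun_eq_iff add_divide_distrib[symmetric] algebra_simps)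
next
  fix c and v :: "'c vec"
  show "act_deriv r g z (\<lambda>i. c * v i) = (\<lambda>i. c * act_deriv r g z v i)"
    unfolding act_deriv_def mat_vec_scale by (auto simp: fun_eq_iff algebra_simps)
next
  fix e :: real assume e: "e > 0"
  obtain C \<delta> where C: "0 \<le> C" "0 < \<delta>" and quad: "\<And>h. is_vec (r - 1) h \<Longrightarrow> vnorm av (r - 1) h < \<delta> \<Longrightarrow>
      vnorm av (r - 1) (\<lambda>i. act r g (\<lambda>j. z j + h j) i - act r g z i - act_deriv r g z h i)
        \<le> C * vnorm av (r - 1) h * vnorm av (r - 1) h"
    using act_remainder_quadratic[OF r lam0] by blast
  show "\<exists>d>0. \<forall>h. is_vec (r - 1) h \<and> vnorm av (r - 1) h < d \<longrightarrow>
      vnorm av (r - 1) (\<lambda>i. act r g (\<lambda>j. z j + h j) i - act r g z i - act_deriv r g z h i)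
        \<le> e * vnorm av (r - 1) h"
  proof (intro exI[of _ "min \<delta> (e / (C + 1))"] conjI allI impI)
    fix h assume h: "is_vec (r - 1) h \<and> vnorm av (r - 1) h < min \<delta> (e / (C + 1))"
    have n0: "0 \<le> vnorm av (r - 1) h" using vnorm_nonneg r by simp
    have "C * vnorm av (r - 1) h \<le> C * (e / (C + 1))" using h C by (intro mult_left_mono) auto
    also have "\<dots> \<le> e" using C e by (simp add: field_simps)
    finally have "C * vnorm av (r - 1) h * vnorm av (r - 1) h \<le> e * vnorm av (r - 1) h"
      using n0 by (rule mult_right_mono)
    then show "vnorm av (r - 1) (\<lambda>i. act r g (\<lambda>j. z j + h j) i - act r g z i - act_deriv r g z h i)
        \<le> e * vnorm av (r - 1) h"
      using quad h by (meson min_less_iff_conj order_trans)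
  qed (use C e in simp)
qed

lemma tangent_H_eq:
  assumes t: "0 < av t" "av t < 1" and r: "2 \<le> r"
    and lam0: "mat_vec r g (homog r (fst \<alpha>)) (r - 1) \<noteq> 0"
  shows "tangent_H av r g \<alpha> = {(v, act_deriv r g (fst \<alpha>) v) | v. is_vec (r - 1) v}"
proof -
  have D: "has_deriv_at av (r - 1) (act r g) (act_deriv r g (fst \<alpha>)) (fst \<alpha>)"
    using has_deriv_at_act[OF r lam0] .
  have "L v = act_deriv r g (fst \<alpha>) v"
    if "has_deriv_at av (r - 1) (act r g) L (fst \<alpha>)" "is_vec (r - 1) v" for L v
    using has_deriv_at_unique[OF t _ that(1) D that(2)] r by simp
  then show ?thesis
    using D unfolding tangent_H_def by blast
qed

end

section \<open>A criterion for a double eigenvalue\<close>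

lemma sum_lessThan_single:
  fixes j n :: nat
  assumes "j < n" "\<And>i. i < n \<Longrightarrow> i \<noteq> j \<Longrightarrow> f i = 0"
  shows "(\<Sum>i<n. f i) = (f j :: 'a::comm_monoid_add)"
  using assms sum.remove[OF finite_lessThan[of n], of j f] sum.neutral[of "{..<n} - {j}" f] by auto

text \<open>Expand \<open>det (X - B)\<close> along column \<open>n - 1\<close> and then along column \<open>j\<close> of the minor.\<close>
lemma char_poly_two_eigencolumns:
  fixes B :: "'a::field Matrix.mat"
  assumes B: "B \<in> carrier_mat n n" and j: "j < n - 1"
    and last: "\<And>i. i < n \<Longrightarrow> B $$ (i, n - 1) = (if i = n - 1 then lam else 0)"
    and colj: "\<And>i. i < n \<Longrightarrow> B $$ (i, j) = (if i = j then lam else 0) + (if i = n - 1 then b else 0)"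
  shows "[:-lam, 1:]^2 dvd char_poly B"
proof -
  define C where "C = char_poly_matrix B"
  define M where "M = mat_delete C (n - 1) (n - 1)"
  have C: "C \<in> carrier_mat n n" unfolding C_def using B by simp
  have M: "M \<in> carrier_mat (n - 1) (n - 1)" unfolding M_def using mat_delete_carrier[OF C] .
  have Cij: "C $$ (i, c) = (if i = c then [:0, 1:] else 0) + [:- B $$ (i, c):]" if "i < n" "c < n" for i c
    unfolding C_def char_poly_matrix_def using that B by auto
  have Mij: "M $$ (i, c) = C $$ (i, c)" if "i < n - 1" "c < n - 1" for i c
    unfolding M_def mat_delete_def using that C by auto
  have n1: "n - 1 < n" using j by simp
  have "det C = (\<Sum>i<n. C $$ (i, n - 1) * cofactor C i (n - 1))"
    by (rule laplace_expansion_column[OF C n1])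
  also have "\<dots> = [:-lam, 1:] * det M"
    using Cij last n1 by (subst sum_lessThan_single[OF n1]) (auto simp: cofactor_def M_def)
  finally have detC: "det C = [:-lam, 1:] * det M" .
  have "det M = (\<Sum>i<n - 1. M $$ (i, j) * cofactor M i j)"
    by (rule laplace_expansion_column[OF M j])
  also have "\<dots> = [:-lam, 1:] * cofactor M j j"
    using Mij Cij colj j by (subst sum_lessThan_single[OF j]) auto
  finally have "char_poly B = [:-lam, 1:] * ([:-lam, 1:] * cofactor M j j)"
    using detC unfolding C_def char_poly_def by simp
  then show ?thesis by (metis dvd_triv_left mult.assoc power2_eq_square)
qed

lemma last_nonzero_index:
  fixes U :: "'a::zero Matrix.vec"
  assumes U: "U \<in> carrier_vec n" "U \<noteq> 0\<^sub>v n" "U $ (n - 1) = 0"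
  obtains j where "j < n - 1" "U $ j \<noteq> 0" "\<And>i. i < n \<Longrightarrow> j < i \<Longrightarrow> U $ i = 0"
proof -
  define J where "J = {i. i < n \<and> U $ i \<noteq> 0}"
  have "J \<noteq> {}"
  proof
    assume "J = {}"
    then have "U = 0\<^sub>v n" using U(1) unfolding J_def by (intro eq_vecI) auto
    then show False using U(2) by simp
  qed
  moreover have "finite J" unfolding J_def by simp
  ultimately have max: "Max J \<in> J" "\<And>i. i \<in> J \<Longrightarrow> i \<le> Max J" by auto
  then have "Max J < n" "U $ Max J \<noteq> 0" unfolding J_def by auto
  then have "Max J < n - 1" using U(3) by (cases "Max J = n - 1") auto
  moreover have "U $ i = 0" if "i < n" "Max J < i" for i
  proof (rule ccontr)
    assume "U $ i \<noteq> 0"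
    then have "i \<le> Max J" using max(2)[of i] that(1) unfolding J_def by blast
    then show False using that(2) by simp
  qed
  ultimately show ?thesis using that \<open>U $ Max J \<noteq> 0\<close> by blast
qed

lemma upper_triangular_invertible:
  fixes P :: "'a::field Matrix.mat"
  assumes P: "P \<in> carrier_mat n n" "upper_triangular P" and diag: "\<And>i. i < n \<Longrightarrow> P $$ (i, i) \<noteq> 0"
  obtains Q where "Q \<in> carrier_mat n n" "P * Q = 1\<^sub>m n" "Q * P = 1\<^sub>m n"
proof -
  have "det P = (\<Prod>i = 0..<n. P $$ (i, i))"
    using det_upper_triangular[OF P(2,1)] prod_list_diag_prod[of P] P by simp
  also have "\<dots> \<noteq> 0" using diag by (subst prod_zero_iff) auto
  finally show ?thesis
    using that det_non_zero_imp_unit[OF P(1), of undefined]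
    unfolding Units_def ring_mat_simps by (auto simp: ring_mat_def)
qed

lemma similar_mat_conjugate:
  assumes G: "G \<in> carrier_mat n n" and P: "P \<in> carrier_mat n n" and Q: "Q \<in> carrier_mat n n"
    and PQ: "P * Q = 1\<^sub>m n" and QP: "Q * P = 1\<^sub>m n"
  shows "similar_mat G (Q * G * P)"
proof -
  have "P * (Q * G * P) * Q = (P * Q) * G * (P * Q)"
    using P Q G by (simp add: assoc_mult_mat[of _ n n _ n _ n])
  then have "G = P * (Q * G * P) * Q" using PQ G by simp
  then show ?thesis using P Q G PQ QP by (intro similar_matI[of _ _ P Q n]) auto
qed

text \<open>\<open>V\<close> is an eigenvector for \<open>\<lambda>\<close>, and \<open>U\<close> is one modulo \<open>V\<close>; in a basis containing both,
  \<open>G\<close> becomes a matrix as in \<open>char_poly_two_eigencolumns\<close>.\<close>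
lemma char_poly_double_root:
  fixes G :: "'a::field Matrix.mat"
  assumes G: "G \<in> carrier_mat n n" and U: "U \<in> carrier_vec n" and V: "V \<in> carrier_vec n"
    and GV: "G *\<^sub>v V = lam \<cdot>\<^sub>v V" and GU: "G *\<^sub>v U = lam \<cdot>\<^sub>v U + b \<cdot>\<^sub>v V"
    and n: "2 \<le> n" and V1: "V $ (n - 1) = 1" and U1: "U $ (n - 1) = 0" and U0: "U \<noteq> 0\<^sub>v n"
  shows "[:-lam, 1:]^2 dvd char_poly G"
proof -
  obtain j where j: "j < n - 1" "U $ j \<noteq> 0" "\<And>i. i < n \<Longrightarrow> j < i \<Longrightarrow> U $ i = 0"
    using last_nonzero_index[OF U U0 U1] by blast
  define P where "P = mat n n (\<lambda>(i, c).
    if c = j then U $ i else if c = n - 1 then V $ i else if i = c then 1 else (0::'a))"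
  have P: "P \<in> carrier_mat n n" unfolding P_def by simp
  have colP: "col P j = U" "col P (n - 1) = V"
    using U V j unfolding P_def by (auto intro!: eq_vecI)
  have "upper_triangular P" unfolding upper_triangular_def P_def using j by auto
  moreover have "P $$ (i, i) \<noteq> 0" if "i < n" for i unfolding P_def using j(1,2) V1 that by auto
  ultimately obtain Q where Q: "Q \<in> carrier_mat n n" and PQ: "P * Q = 1\<^sub>m n" and QP: "Q * P = 1\<^sub>m n"
    using upper_triangular_invertible[OF P] by blast
  define B where "B = Q * G * P"
  have B: "B \<in> carrier_mat n n" unfolding B_def using Q G P by auto
  have "similar_mat G B" unfolding B_def by (rule similar_mat_conjugate[OF G P Q PQ QP])
  have colB: "col B c = Q *\<^sub>v (G *\<^sub>v col P c)" if "c < n" for c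
  proof -
    have "col B c = (Q * G) *\<^sub>v col P c" unfolding B_def using that P Q G by (intro col_mult2) auto
    then show ?thesis using that P Q G by simp
  qed
  have QV: "Q *\<^sub>v V = unit_vec n (n - 1)" and QU: "Q *\<^sub>v U = unit_vec n j"
    using colP col_mult2[OF Q P, of "n - 1"] col_mult2[OF Q P, of j] j QP by auto
  have "col B (n - 1) = lam \<cdot>\<^sub>v unit_vec n (n - 1)"
    using colB[of "n - 1"] n colP GV QV mult_mat_vec[OF Q V] by simp
  then have last: "B $$ (i, n - 1) = (if i = n - 1 then lam else 0)" if "i < n" for i
    using index_col[of i B "n - 1"] that n B by (cases "i = n - 1") auto
  have "col B j = lam \<cdot>\<^sub>v unit_vec n j + b \<cdot>\<^sub>v unit_vec n (n - 1)"
    using colB[of j] j colP GU QV QU U V Q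
    by (simp add: mult_add_distrib_mat_vec[OF Q] mult_mat_vec[OF Q])
  then have colj: "B $$ (i, j) = (if i = j then lam else 0) + (if i = n - 1 then b else 0)"
    if "i < n" for i
    using index_col[of i B j] that j B by (cases "i = j"; cases "i = n - 1") auto
  show ?thesis
    using char_poly_two_eigencolumns[OF B j(1) last colj] char_poly_similar[OF \<open>similar_mat G B\<close>]
    by simp
qed

section \<open>Matrices over a subfield with a double eigenvalue\<close>

fun poly_mat :: "nat \<Rightarrow> 'a::field list \<Rightarrow> 'a Matrix.mat \<Rightarrow> 'a Matrix.mat" where
  "poly_mat n [] A = 0\<^sub>m n n"
| "poly_mat n (c # cs) A = c \<cdot>\<^sub>m 1\<^sub>m n + A * poly_mat n cs A"

lemma smult_one_mat_mult_vec:
  fixes c :: "'a::field"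
  assumes w: "w \<in> carrier_vec n" shows "(c \<cdot>\<^sub>m 1\<^sub>m n) *\<^sub>v w = c \<cdot>\<^sub>v w"
proof (rule eq_vecI)
  fix i assume "i < dim_vec (c \<cdot>\<^sub>v w)"
  then have i: "i < n" using w by simp
  have "((c \<cdot>\<^sub>m 1\<^sub>m n) *\<^sub>v w) $ i = (\<Sum>l\<in>{0..<n}. (c \<cdot>\<^sub>m 1\<^sub>m n) $$ (i, l) * w $ l)"
    using i w by (auto simp: scalar_prod_def intro!: sum.cong)
  also have "\<dots> = (\<Sum>l\<in>{0..<n}. if l = i then c * w $ i else 0)"
    using i by (intro sum.cong) auto
  finally show "((c \<cdot>\<^sub>m 1\<^sub>m n) *\<^sub>v w) $ i = (c \<cdot>\<^sub>v w) $ i" using i w by simp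
qed (use w in simp)

lemma zero_mat_mult_vec: "x \<in> carrier_vec n \<Longrightarrow> 0\<^sub>m m n *\<^sub>v x = 0\<^sub>v m"
  by (intro eq_vecI) (auto simp: scalar_prod_def)

lemma poly_mat_carrier: "A \<in> carrier_mat n n \<Longrightarrow> poly_mat n cs A \<in> carrier_mat n n"
  by (induction cs) auto

lemma poly_mat_mult_eigenvector:
  assumes A: "A \<in> carrier_mat n n" and w: "w \<in> carrier_vec n" and Aw: "A *\<^sub>v w = \<mu> \<cdot>\<^sub>v w"
  shows "poly_mat n cs A *\<^sub>v w = horner_sum id \<mu> cs \<cdot>\<^sub>v w"
proof (induction cs)
  case Nil
  then show ?case using w by (intro eq_vecI) auto
next
  case (Cons c cs)
  have M: "poly_mat n cs A \<in> carrier_mat n n" using poly_mat_carrier[OF A] .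
  have "poly_mat n (c # cs) A *\<^sub>v w = (c \<cdot>\<^sub>m 1\<^sub>m n) *\<^sub>v w + A *\<^sub>v (poly_mat n cs A *\<^sub>v w)"
    using A M w by (simp add: add_mult_distrib_mat_vec[of _ n n])
  also have "\<dots> = c \<cdot>\<^sub>v w + horner_sum id \<mu> cs \<cdot>\<^sub>v (\<mu> \<cdot>\<^sub>v w)"
    using Cons A w Aw by (simp add: mult_mat_vec smult_one_mat_mult_vec id_def)
  finally show ?case using w by (intro eq_vecI) (auto simp: algebra_simps id_def)
qed

lemma poly_mat_entries_in:
  assumes S: "is_subfield S" and A: "A \<in> carrier_mat n n"
    and AS: "\<And>i j. i < n \<Longrightarrow> j < n \<Longrightarrow> A $$ (i, j) \<in> S"
  shows "set cs \<subseteq> S \<Longrightarrow> i < n \<Longrightarrow> j < n \<Longrightarrow> poly_mat n cs A $$ (i, j) \<in> S"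
proof (induction cs arbitrary: i j)
  case Nil
  then show ?case using subfield_zero[OF S] by simp
next
  case (Cons c cs)
  have M: "poly_mat n cs A \<in> carrier_mat n n" using poly_mat_carrier[OF A] .
  have "poly_mat n (c # cs) A $$ (i, j)
      = c * (if i = j then 1 else 0) + (\<Sum>l = 0..<n. A $$ (i, l) * poly_mat n cs A $$ (l, j))"
    using Cons.prems A M by (simp add: scalar_prod_def)
  also have "\<dots> \<in> S" using Cons AS
    by (intro subfield_add[OF S] subfield_mult[OF S] subfield_sum[OF S])
      (auto simp: subfield_zero[OF S] subfield_one[OF S])
  finally show ?case .
qed

lemma poly_mat_linear:
  assumes A: "A \<in> carrier_mat n n" shows "poly_mat n [c, 1] A = c \<cdot>\<^sub>m 1\<^sub>m n + A"
proof -
  have "poly_mat n [1] A = 1\<^sub>m n" using A by (intro eq_matI) (auto simp: scalar_prod_def)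
  then show ?thesis using A by simp
qed

lemma poly_over_char_poly:
  assumes S: "is_subfield S" and G: "G \<in> carrier_mat n n"
    and GS: "\<And>i j. i < n \<Longrightarrow> j < n \<Longrightarrow> G $$ (i, j) \<in> S"
  shows "poly_over S (char_poly G)"
proof -
  have entries: "poly_over S (char_poly_matrix G $$ (i, j))" if "i < n" "j < n" for i j
  proof -
    have "char_poly_matrix G $$ (i, j) = (if i = j then [:0, 1:] else 0) + [:- G $$ (i, j):]"
      unfolding char_poly_matrix_def using that G by auto
    then show ?thesis using S GS[OF that]
      by (auto intro!: poly_over_add poly_over_pCons poly_over_zero subfield_uminus
          simp: subfield_zero subfield_one)
  qed
  have "char_poly G = (\<Sum>p | p permutes {0..<n}. signof p * (\<Prod>i = 0..<n. char_poly_matrix G $$ (i, p i)))"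
    unfolding char_poly_def by (rule det_def'[OF char_poly_matrix_closed[OF G]])
  also have "poly_over S \<dots>"
  proof (intro poly_over_sum[OF S] poly_over_mult[OF S] poly_over_prod[OF S])
    fix p assume "p \<in> {p. p permutes {0..<n}}"
    show "poly_over S (signof p)"
      unfolding sign_def using poly_over_one[OF S] poly_over_uminus[OF S poly_over_one[OF S]] by auto
  next
    fix p i assume "p \<in> {p. p permutes {0..<n}}" and "i \<in> {0..<n}"
    then show "poly_over S (char_poly_matrix G $$ (i, p i))"
      by (intro entries) (auto dest: permutes_in_image)
  qed
  finally show ?thesis .
qed

definition coords_independent_over :: "'a::field set \<Rightarrow> 'a Matrix.vec \<Rightarrow> bool" where
  "coords_independent_over S V \<longleftrightarrow> (\<forall>c. (\<forall>l<dim_vec V. c l \<in> S) \<and> (\<Sum>l<dim_vec V. c l * V $ l) = 0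
     \<longrightarrow> (\<forall>l<dim_vec V. c l = 0))"

text \<open>Each row of \<open>M\<close> is a linear relation over \<open>S\<close> between the coordinates of \<open>V\<close>.\<close>
lemma mat_eq_0_if_kills_independent:
  assumes M: "M \<in> carrier_mat n n" and MS: "\<And>i j. i < n \<Longrightarrow> j < n \<Longrightarrow> M $$ (i, j) \<in> S"
    and V: "V \<in> carrier_vec n" "coords_independent_over S V" and MV: "M *\<^sub>v V = 0\<^sub>v n"
  shows "M = 0\<^sub>m n n"
proof (rule eq_matI)
  fix i j assume "i < dim_row (0\<^sub>m n n)" "j < dim_col (0\<^sub>m n n)"
  then have i: "i < n" and j: "j < n" by auto
  have "(\<Sum>l<n. M $$ (i, l) * V $ l) = (M *\<^sub>v V) $ i"
    using M V i by (simp add: scalar_prod_def atLeast0LessThan mult_mat_vec_def)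
  then have "\<forall>l<n. M $$ (i, l) = 0"
    using V MS[OF i] MV i unfolding coords_independent_over_def
    by (auto dest!: spec[of _ "\<lambda>l. M $$ (i, l)"])
  then show "M $$ (i, j) = 0\<^sub>m n n $$ (i, j)" using i j by simp
qed (use M in auto)

lemma annihilator_root_if_char_poly_root:
  fixes A :: "'a::field Matrix.mat"
  assumes A: "A \<in> carrier_mat n n" and q: "poly_mat n (coeffs q) A = 0\<^sub>m n n"
    and y: "poly (char_poly A) y = 0"
  shows "poly q y = 0"
proof -
  obtain x where x: "x \<in> carrier_vec n" "x \<noteq> 0\<^sub>v n" "A *\<^sub>v x = y \<cdot>\<^sub>v x"
    using y eigenvalue_root_char_poly[OF A] A unfolding eigenvalue_def eigenvector_def by auto
  have "poly q y \<cdot>\<^sub>v x = 0\<^sub>v n"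
    using poly_mat_mult_eigenvector[OF A x(1,3), of "coeffs q"] q zero_mat_mult_vec[OF x(1)]
    by (simp add: poly_def)
  show ?thesis
  proof (rule ccontr)
    assume "poly q y \<noteq> 0"
    have "x = 0\<^sub>v n"
    proof (rule eq_vecI)
      fix i assume "i < dim_vec (0\<^sub>v n :: 'a Matrix.vec)"
      then have "poly q y * x $ i = 0"
        using arg_cong[OF \<open>poly q y \<cdot>\<^sub>v x = 0\<^sub>v n\<close>, of "\<lambda>v. v $ i"] x(1) by simp
      then show "x $ i = 0\<^sub>v n $ i" using \<open>poly q y \<noteq> 0\<close> \<open>i < dim_vec (0\<^sub>v n)\<close> by simp
    qed (use x(1) in simp)
    then show False using x(2) by simp
  qed
qed

lemma poly_mat_min_poly_eq_0:
  assumes S: "is_subfield S" and G: "G \<in> carrier_mat n n" and GS: "\<And>i j. i < n \<Longrightarrow> j < n \<Longrightarrow> G $$ (i, j) \<in> S"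
    and V: "V \<in> carrier_vec n" "coords_independent_over S V" and GV: "G *\<^sub>v V = lam \<cdot>\<^sub>v V"
    and q: "is_min_poly S lam q"
  shows "poly_mat n (coeffs q) G = 0\<^sub>m n n"
proof (rule mat_eq_0_if_kills_independent[OF poly_mat_carrier[OF G] _ V])
  show "poly_mat n (coeffs q) G $$ (i, j) \<in> S" if "i < n" "j < n" for i j
    using q that by (intro poly_mat_entries_in[OF S G GS]) (auto simp: is_min_poly_def poly_over_def)
  show "poly_mat n (coeffs q) G *\<^sub>v V = 0\<^sub>v n"
    using poly_mat_mult_eigenvector[OF G V(1) GV, of "coeffs q"] q V(1)
    by (auto simp: is_min_poly_def poly_def intro!: eq_vecI)
qed

lemma smult_one_if_poly_mat_linear_eq_0:
  assumes G: "G \<in> carrier_mat n n" and b: "poly_mat n [b, 1] G = 0\<^sub>m n n"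
  shows "G = (- b) \<cdot>\<^sub>m 1\<^sub>m n"
proof (rule eq_matI)
  fix i j assume "i < dim_row ((- b) \<cdot>\<^sub>m 1\<^sub>m n)" "j < dim_col ((- b) \<cdot>\<^sub>m 1\<^sub>m n)"
  then have ij: "i < n" "j < n" by auto
  have "(b \<cdot>\<^sub>m 1\<^sub>m n + G) $$ (i, j) = 0" using b ij poly_mat_linear[OF G] by simp
  then show "G $$ (i, j) = ((- b) \<cdot>\<^sub>m 1\<^sub>m n) $$ (i, j)"
    using ij G by (cases "i = j") (auto simp: eq_neg_iff_add_eq_0 add.commute)
qed (use G in auto)

text \<open>Let \<open>q\<close> be the minimal polynomial of \<open>\<lambda>\<close> over \<open>S\<close>. Then \<open>q(G) = 0\<close>, so \<open>\<chi>\<^sub>G = q\<^sup>e\<close> and the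
  degree of \<open>q\<close> divides the prime \<open>r\<close>; degree \<open>r\<close> would make \<open>\<lambda>\<close> a simple root of \<open>\<chi>\<^sub>G = q\<close>.\<close>
lemma scalar_if_double_root:
  fixes G :: "'c::field Matrix.mat"
  assumes S: "is_subfield S" and ac: "\<forall>p::'c poly. degree p > 0 \<longrightarrow> (\<exists>x. poly p x = 0)"
    and r: "prime r" and ch: "(of_nat r :: 'c) \<noteq> 0"
    and G: "G \<in> carrier_mat r r" and GS: "\<And>i j. i < r \<Longrightarrow> j < r \<Longrightarrow> G $$ (i, j) \<in> S"
    and V: "V \<in> carrier_vec r" "V \<noteq> 0\<^sub>v r" "coords_independent_over S V" and GV: "G *\<^sub>v V = lam \<cdot>\<^sub>v V"
    and double: "[:-lam, 1:]^2 dvd char_poly G"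
  shows "\<exists>a. G = a \<cdot>\<^sub>m 1\<^sub>m r"
proof -
  define \<chi> where "\<chi> = char_poly G"
  have \<chi>S: "poly_over S \<chi>" unfolding \<chi>_def by (rule poly_over_char_poly[OF S G GS])
  have \<chi>r: "degree \<chi> = r" "lead_coeff \<chi> = 1"
    using degree_monic_char_poly[OF G] unfolding \<chi>_def by auto
  then have \<chi>0: "\<chi> \<noteq> 0" by auto
  have "eigenvalue G lam" unfolding eigenvalue_def eigenvector_def using V GV G by auto
  then have "poly \<chi> lam = 0" using eigenvalue_root_char_poly[OF G] unfolding \<chi>_def by simp
  then obtain q where q: "is_min_poly S lam q" using is_min_poly_exists[OF S \<chi>0 \<chi>S] by blast
  have Q0: "poly_mat r (coeffs q) G = 0\<^sub>m r r" by (rule poly_mat_min_poly_eq_0[OF S G GS V(1,3) GV q])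
  then have "\<forall>y. poly \<chi> y = 0 \<longrightarrow> poly q y = 0"
    using annihilator_root_if_char_poly_root[OF G] unfolding \<chi>_def by blast
  then obtain e where e: "\<chi> = q ^ e" using is_min_poly_power[OF S ac q \<chi>S \<chi>r(2)] by blast
  have r_eq: "r = e * degree q"
    using \<chi>r(1) e is_min_poly_nonzero[OF q] by (simp add: degree_power_eq mult.commute)
  have "degree q = 1"
  proof (rule ccontr)
    assume "degree q \<noteq> 1"
    then have dq: "degree q = r" using r r_eq unfolding prime_nat_iff by (metis dvd_triv_right)
    then have "e = 1" using r_eq prime_gt_0_nat[OF r] by simp
    then have "order lam \<chi> = 1" using order_is_min_poly[OF S q] ch dq e by simp
    moreover have "2 \<le> order lam \<chi>" using double \<chi>0 unfolding \<chi>_def order_divides by simp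
    ultimately show False by simp
  qed
  then obtain a b where "q = [:b, a:]" "a \<noteq> 0" by (rule degree1_coeffs)
  then have "q = [:b, 1:]" using q by (simp add: is_min_poly_def)
  then show ?thesis using smult_one_if_poly_mat_linear_eq_0[OF G] Q0 by auto
qed

section \<open>Fixed points of the action in \<open>\<Omega>\<^sub>r\<close>\<close>

lemma mat_mult_vec_eq_mat_vec: "mat r r (\<lambda>(i, j). g i j) *\<^sub>v vec r x = vec r (mat_vec r g x)"
  by (intro eq_vecI) (simp_all add: scalar_prod_def mat_vec_def atLeast0LessThan)

lemma vec_nonzero_if_is_vec:
  assumes u: "is_vec (r - 1) u" "u \<noteq> (\<lambda>i. 0)"
  shows "vec r u \<noteq> 0\<^sub>v r"
proof
  assume u0: "vec r u = 0\<^sub>v r"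
  have "u i = 0" for i
  proof (cases "i < r")
    case True
    have "vec r u $ i = 0\<^sub>v r $ i" using u0 by simp
    then show ?thesis using True by simp
  qed (use u(1) in \<open>simp add: is_vec_def\<close>)
  then show False using u(2) by blast
qed

lemma Omega_coords_independent:
  assumes z: "z \<in> Omega S r" and r: "1 \<le> r"
  shows "coords_independent_over S (vec r (homog r z))"
  unfolding coords_independent_over_def
proof (rule allI, rule impI)
  fix c assume "(\<forall>l<dim_vec (vec r (homog r z)). c l \<in> S) \<and>
    (\<Sum>l<dim_vec (vec r (homog r z)). c l * vec r (homog r z) $ l) = 0"
  then have c: "\<forall>l<r. c l \<in> S" and rel: "(\<Sum>l<r. c l * homog r z l) = 0" by auto
  show "\<forall>l<dim_vec (vec r (homog r z)). c l = 0"
  proof (rule ccontr)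
    assume "\<not> ?thesis"
    then have "\<exists>l<r. c l \<noteq> 0" by auto
    with z c have "(\<Sum>l<r - 1. c l * z l) + c (r - 1) \<noteq> 0" unfolding Omega_def by blast
    moreover have "(\<Sum>l<r. c l * homog r z l) = (\<Sum>l<r - 1. c l * z l) + c (r - 1)"
      using r sum.lessThan_Suc[of "\<lambda>l. c l * homog r z l" "r - 1"] by (simp add: homog_def)
    ultimately show False using rel by simp
  qed
qed

lemma Omega_nonzero:
  assumes S: "is_subfield S" and z: "z \<in> Omega S r" and r: "2 \<le> r"
  shows "z \<noteq> (\<lambda>i. 0)"
proof
  assume z0: "z = (\<lambda>i. 0)"
  define c :: "nat \<Rightarrow> 'a" where "c = (\<lambda>i. if i = 0 then 1 else 0)"
  have "(\<forall>i<r. c i \<in> S) \<and> (\<exists>i<r. c i \<noteq> 0)"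
    using S r unfolding c_def by (auto simp: subfield_zero subfield_one)
  then have "(\<Sum>i<r - 1. c i * z i) + c (r - 1) \<noteq> 0" using z unfolding Omega_def by blast
  then show False using z0 r by (simp add: c_def)
qed

lemma act_fixed_point_denominator_nonzero:
  assumes S: "is_subfield S" and z: "z \<in> Omega S r" and r: "2 \<le> r" and fixed: "act r g z = z"
  shows "mat_vec r g (homog r z) (r - 1) \<noteq> 0"
proof
  assume "mat_vec r g (homog r z) (r - 1) = 0"
  then have "act r g z = (\<lambda>i. 0)" unfolding act_def Let_def by (simp add: fun_eq_iff)
  then show False using fixed Omega_nonzero[OF S z r] by simp
qed

lemma act_fixed_point_eigenvector:
  assumes fixed: "act r g z = z" and lam0: "mat_vec r g (homog r z) (r - 1) \<noteq> 0"
  shows "mat r r (\<lambda>(i, j). g i j) *\<^sub>v vec r (homog r z)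
    = mat_vec r g (homog r z) (r - 1) \<cdot>\<^sub>v vec r (homog r z)"
proof -
  define lam where "lam = mat_vec r g (homog r z) (r - 1)"
  have "mat_vec r g (homog r z) i = lam * homog r z i" if i: "i < r" for i
  proof (cases "i < r - 1")
    case True
    then have "mat_vec r g (homog r z) i / lam = z i"
      using fun_cong[OF fixed, of i] unfolding act_def Let_def lam_def by simp
    then show ?thesis using lam0 True by (simp add: field_simps homog_def lam_def)
  next
    case False
    then show ?thesis using i by (simp add: homog_def lam_def)
  qed
  then show ?thesis
    unfolding mat_mult_vec_eq_mat_vec lam_def[symmetric] by (intro eq_vecI) simp_all
qed

lemma act_deriv_fixed_vector:
  assumes fixed: "act r g z = z" and lam0: "mat_vec r g (homog r z) (r - 1) \<noteq> 0"
    and u: "is_vec (r - 1) u" "act_deriv r g z u = u"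
  shows "mat r r (\<lambda>(i, j). g i j) *\<^sub>v vec r u
    = mat_vec r g (homog r z) (r - 1) \<cdot>\<^sub>v vec r u + mat_vec r g u (r - 1) \<cdot>\<^sub>v vec r (homog r z)"
proof -
  define lam where "lam = mat_vec r g (homog r z) (r - 1)"
  define b where "b = mat_vec r g u (r - 1)"
  have "mat_vec r g u i = lam * u i + b * homog r z i" if i: "i < r" for i
  proof (cases "i < r - 1")
    case True
    then have "(mat_vec r g u i - z i * b) / lam = u i"
      using fun_cong[OF u(2), of i] unfolding act_deriv_def fixed lam_def b_def by simp
    then show ?thesis using lam0 True by (simp add: field_simps homog_def lam_def)
  next
    case False
    then have "i = r - 1" using i by simp
    then show ?thesis using u(1) by (simp add: homog_def is_vec_def b_def)
  qed
  then show ?thesis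
    unfolding mat_mult_vec_eq_mat_vec lam_def[symmetric] b_def[symmetric] by (intro eq_vecI) simp_all
qed

lemma Hgraph_inter_mat_one:
  assumes "\<alpha> \<in> Hgraph S r g \<inter> Hgraph S r (mat_one r)"
  obtains z where "z \<in> Omega S r" "\<alpha> = (z, z)" "act r g z = z"
proof -
  obtain z z' where z: "z \<in> Omega S r" "\<alpha> = (z, act r g z)"
    and z': "z' \<in> Omega S r" "\<alpha> = (z', act r (mat_one r) z')"
    using assms unfolding Hgraph_def by blast
  have zv: "is_vec (r - 1) z" using z(1) unfolding Omega_def by blast
  have "act r g z = z" using z(2) z'(2) act_mat_one[OF zv] by auto
  then show ?thesis using that z by simp
qed

lemma Hgraph_scalar:
  assumes r: "2 \<le> r" and g: "is_mat r g" "g \<noteq> mat_zero"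
    and scalar: "\<forall>i<r. \<forall>l<r. g i l = (if i = l then a else 0)"
  shows "Hgraph S r g = Hgraph S r (mat_one r)"
proof -
  have a0: "a \<noteq> 0"
  proof
    assume "a = 0"
    then have "g i j = 0" for i j
      using g(1) scalar unfolding is_mat_def by (cases "i < r \<and> j < r") auto
    then show False using g(2) unfolding mat_zero_def by blast
  qed
  have mv: "mat_vec r g x i = a * x i" if "i < r" for x i
  proof -
    have "mat_vec r g x i = (\<Sum>l<r. if l = i then a * x i else 0)"
      unfolding mat_vec_def using scalar that by (intro sum.cong) auto
    then show ?thesis using that by simp
  qed
  have "act r g z = act r (mat_one r) z" if "z \<in> Omega S r" for z
  proof -
    have z: "is_vec (r - 1) z" using that unfolding Omega_def by blast
    have "act r g z i = z i" for i
      using z a0 r unfolding act_def Let_def is_vec_def by (simp add: mv homog_def)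
    then show ?thesis using act_mat_one[OF z] by auto
  qed
  then show ?thesis unfolding Hgraph_def by (intro Collect_cong) auto
qed

lemma of_nat_prime_nonzero:
  assumes "prime p" "p \<noteq> CHAR('a::field)"
  shows "(of_nat p :: 'a) \<noteq> 0"
proof
  assume "(of_nat p :: 'a) = 0"
  then have "CHAR('a) dvd p" by (simp add: of_nat_eq_0_iff_char_dvd)
  then have "CHAR('a) = 1" using assms unfolding prime_nat_iff by blast
  then show False by simp
qed

lemma scalar_if_fixed_tangent_vector:
  fixes g :: "'c::field mat"
  assumes S: "is_subfield S" and ac: "\<forall>p::'c poly. degree p > 0 \<longrightarrow> (\<exists>x. poly p x = 0)"
    and r: "prime r" and ch: "(of_nat r :: 'c) \<noteq> 0" and gS: "\<forall>i j. g i j \<in> S"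
    and z: "z \<in> Omega S r" and fixed: "act r g z = z"
    and u: "is_vec (r - 1) u" "u \<noteq> (\<lambda>i. 0)" "act_deriv r g z u = u"
  shows "\<exists>a. \<forall>i<r. \<forall>l<r. g i l = (if i = l then a else 0)"
proof -
  have r2: "2 \<le> r" using r by (simp add: prime_ge_2_nat)
  define G where "G = mat r r (\<lambda>(i, j). g i j)"
  define V where "V = vec r (homog r z)"
  define U where "U = vec r u"
  have lam0: "mat_vec r g (homog r z) (r - 1) \<noteq> 0"
    by (rule act_fixed_point_denominator_nonzero[OF S z r2 fixed])
  have G: "G \<in> carrier_mat r r" and V: "V \<in> carrier_vec r" and U: "U \<in> carrier_vec r"
    and GS: "\<And>i j. i < r \<Longrightarrow> j < r \<Longrightarrow> G $$ (i, j) \<in> S"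
    using gS by (simp_all add: G_def V_def U_def)
  have V1: "V $ (r - 1) = 1" and U1: "U $ (r - 1) = 0"
    using r2 u(1) by (simp_all add: V_def U_def homog_def is_vec_def)
  then have V0: "V \<noteq> 0\<^sub>v r" using r2 by auto
  have "U \<noteq> 0\<^sub>v r" unfolding U_def by (rule vec_nonzero_if_is_vec[OF u(1,2)])
  moreover have GV: "G *\<^sub>v V = mat_vec r g (homog r z) (r - 1) \<cdot>\<^sub>v V"
    unfolding G_def V_def by (rule act_fixed_point_eigenvector[OF fixed lam0])
  moreover have GU: "G *\<^sub>v U = mat_vec r g (homog r z) (r - 1) \<cdot>\<^sub>v U + mat_vec r g u (r - 1) \<cdot>\<^sub>v V"
    unfolding G_def U_def V_def by (rule act_deriv_fixed_vector[OF fixed lam0 u(1,3)])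
  moreover have "coords_independent_over S V"
    using Omega_coords_independent[OF z] r2 unfolding V_def by simp
  ultimately obtain a where "G = a \<cdot>\<^sub>m 1\<^sub>m r"
    using scalar_if_double_root[OF S ac r ch G GS V V0 _ GV] char_poly_double_root[OF G U V GV GU r2 V1 U1]
    by blast
  have "g i l = (if i = l then a else 0)" if "i < r" "l < r" for i l
  proof -
    have "G $$ (i, l) = (a \<cdot>\<^sub>m 1\<^sub>m r) $$ (i, l)" using \<open>G = a \<cdot>\<^sub>m 1\<^sub>m r\<close> by simp
    then show ?thesis using that by (simp add: G_def)
  qed
  then show ?thesis by blast
qed

lemma tangent_H_inter_mat_one:
  assumes N: "nonarch_abs av" and t: "0 < av t" "av t < 1" and r: "2 \<le> r" and S: "is_subfield S"
    and z: "z \<in> Omega S r" and fixed: "act r g z = z"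
  shows "tangent_H av r g (z, z) \<inter> tangent_H av r (mat_one r) (z, z)
    = {(v, v) | v. is_vec (r - 1) v \<and> act_deriv r g z v = v}"
proof -
  have zv: "is_vec (r - 1) z" using z unfolding Omega_def by blast
  have Tg: "tangent_H av r g (z, z) = {(v, act_deriv r g z v) | v. is_vec (r - 1) v}"
    using tangent_H_eq[OF N t r] act_fixed_point_denominator_nonzero[OF S z r fixed] by simp
  have T1: "tangent_H av r (mat_one r) (z, z) = {(v, act_deriv r (mat_one r) z v) | v. is_vec (r - 1) v}"
    using tangent_H_eq[OF N t r] act_fixed_point_denominator_nonzero[OF S z r act_mat_one[OF zv]] by simp
  show ?thesis unfolding Tg T1
  proof (intro equalityI subsetI)
    fix p assume "p \<in> {(v, act_deriv r g z v) | v. is_vec (r - 1) v}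
      \<inter> {(v, act_deriv r (mat_one r) z v) | v. is_vec (r - 1) v}"
    then obtain v w where "p = (v, act_deriv r g z v)" "p = (w, act_deriv r (mat_one r) z w)"
      "is_vec (r - 1) v" "is_vec (r - 1) w" by blast
    then show "p \<in> {(v, v) | v. is_vec (r - 1) v \<and> act_deriv r g z v = v}"
      using act_deriv_mat_one[OF zv] by auto
  next
    fix p assume "p \<in> {(v, v) | v. is_vec (r - 1) v \<and> act_deriv r g z v = v}"
    then obtain v where "p = (v, v)" "is_vec (r - 1) v" "act_deriv r g z v = v" by blast
    then show "p \<in> {(v, act_deriv r g z v) | v. is_vec (r - 1) v}
      \<inter> {(v, act_deriv r (mat_one r) z v) | v. is_vec (r - 1) v}"
      using act_deriv_mat_one[OF zv, of v] by auto
  qed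
qed

theorem lemma7p2:
  fixes av :: "'c::field \<Rightarrow> real" and k Kinf :: "'c set" and r :: nat
    and D :: "'c mat set" and \<gamma> :: "'c mat" and \<alpha> :: "'c vec \<times> 'c vec"
  assumes "function_field_setting av k Kinf"
    and "central_division_algebra_split k Kinf r D"
    and "prime r" and "r \<noteq> CHAR('c)"
    and "\<gamma> \<in> D" and "\<gamma> \<noteq> mat_zero"
    and "Hgraph Kinf r \<gamma> \<noteq> Hgraph Kinf r (mat_one r)"
    and "\<alpha> \<in> Hgraph Kinf r \<gamma> \<inter> Hgraph Kinf r (mat_one r)"
  shows "tangent_H av r \<gamma> \<alpha> \<inter> tangent_H av r (mat_one r) \<alpha> = {((\<lambda>i. 0), (\<lambda>i. 0))}"
proof -
  note setting = assms(1)[unfolded function_field_setting_def]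
  have N: "nonarch_abs av" and S: "is_subfield Kinf"
    and ac: "\<forall>p::'c poly. degree p > 0 \<longrightarrow> (\<exists>x. poly p x = 0)" using setting by blast+
  obtain t where t: "0 < av t" "av t < 1" using setting nonarch_abs_small_element[OF N] by blast
  have r2: "2 \<le> r" using assms(3) by (simp add: prime_ge_2_nat)
  have \<gamma>: "is_mat r \<gamma>" "\<forall>i j. \<gamma> i j \<in> Kinf"
    using assms(2,5) unfolding central_division_algebra_split_def by auto
  obtain z where z: "z \<in> Omega Kinf r" and \<alpha>: "\<alpha> = (z, z)" and fixed: "act r \<gamma> z = z"
    using Hgraph_inter_mat_one[OF assms(8)] by blast
  have "v = (\<lambda>i. 0)" if v: "is_vec (r - 1) v" "act_deriv r \<gamma> z v = v" for v
  proof (rule ccontr)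
    assume "v \<noteq> (\<lambda>i. 0)"
    then obtain a where "\<forall>i<r. \<forall>l<r. \<gamma> i l = (if i = l then a else 0)"
      using scalar_if_fixed_tangent_vector[OF S ac assms(3) of_nat_prime_nonzero[OF assms(3,4)]
          \<gamma>(2) z fixed v(1) _ v(2)] by blast
    then show False using Hgraph_scalar[OF r2 \<gamma>(1) assms(6)] assms(7) by blast
  qed
  moreover have "act_deriv r \<gamma> z (\<lambda>i. 0) = (\<lambda>i. 0)" "is_vec (r - 1) (\<lambda>i. 0 :: 'c)"
    by (simp_all add: act_deriv_def mat_vec_def is_vec_def fun_eq_iff)
  ultimately show ?thesis
    unfolding \<alpha> tangent_H_inter_mat_one[OF N t r2 S z fixed] by blast
qed

end
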